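(* Let $s\in(0,1)$, $N>2s$, $2_s^*=\frac{2N}{N-2s}$, and $\Omega\subset\mathbb{R}^N$ a smooth bounded domain. On $D_0^{s,2}(\Omega)$ let $\|u\|^2=\int_{\mathbb{R}^{2N}}\frac{|u(x)-u(y)|^2}{|x-y|^{N+2s}}dxdy+|u|_2^2$. For $p\in(2,2_s^*]$ let $I_p(u)=\frac12\|u\|^2-\frac1p|u|_p^p$, $\mathcal N_p=\{u\in D_0^{s,2}(\Omega)\setminus\{0\}:\|u\|^2=|u|_p^p\}$ and $m_p=\inf_{\mathcal N_p}I_p$ for $p<2_s^*$; let $m_*=\inf_{\mathcal N_{2_s^*}}I_{2_s^*}$. Then $$\limsup_{p\to 2_s^*}m_p\le m_*.$$
   Context: $D_0^{s,2}(\Omega)$ is the space of functions $u\in L^{2_s^*}(\mathbb{R}^N)$ with finite Gagliardo seminorm and $u\equiv0$ outside $\Omega$; $|\cdot|_q$ is the $L^q(\Omega)$ norm. *)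

theory Defs
  imports "HOL-Analysis.Analysis"
begin

fun Ck_fun :: "nat \<Rightarrow> ('a::euclidean_space \<Rightarrow> real) \<Rightarrow> bool" where
  "Ck_fun 0 f = continuous_on UNIV f"
| "Ck_fun (Suc k) f = (continuous_on UNIV f \<and> f differentiable_on UNIV \<and>
      (\<forall>i\<in>Basis. Ck_fun k (\<lambda>x. frechet_derivative f (at x) i)))"

definition smooth_fun :: "('a::euclidean_space \<Rightarrow> real) \<Rightarrow> bool" where
  "smooth_fun f \<longleftrightarrow> (\<forall>k. Ck_fun k f)"

definition smooth_bounded_domain :: "'a::euclidean_space set \<Rightarrow> bool" where
  "smooth_bounded_domain \<Omega> \<longleftrightarrow> open \<Omega> \<and> connected \<Omega> \<and> \<Omega> \<noteq> {} \<and> bounded \<Omega> \<and>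
     (\<forall>x0\<in>frontier \<Omega>. \<exists>r>0. \<exists>\<phi>. smooth_fun \<phi> \<and>
        (\<forall>x\<in>ball x0 r. frechet_derivative \<phi> (at x) \<noteq> (\<lambda>_. 0)) \<and>
        \<Omega> \<inter> ball x0 r = {x\<in>ball x0 r. \<phi> x < 0})"

definition crit_exp :: "nat \<Rightarrow> real \<Rightarrow> real" where
  "crit_exp N s = 2 * real N / (real N - 2 * s)"

definition gagliardo_integrand :: "real \<Rightarrow> ('a::euclidean_space \<Rightarrow> real) \<Rightarrow> 'a \<times> 'a \<Rightarrow> real" where
  "gagliardo_integrand s u = (\<lambda>(x,y). (u x - u y)\<^sup>2 / norm (x - y) powr (real DIM('a) + 2 * s))"

definition D0s2 :: "real \<Rightarrow> 'a::euclidean_space set \<Rightarrow> ('a \<Rightarrow> real) set" where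
  "D0s2 s \<Omega> = {u. u \<in> borel_measurable lborel \<and>
      integrable lborel (\<lambda>x. \<bar>u x\<bar> powr crit_exp DIM('a) s) \<and>
      integrable (lborel \<Otimes>\<^sub>M lborel) (gagliardo_integrand s u) \<and>
      (\<forall>x. x \<notin> \<Omega> \<longrightarrow> u x = 0)}"

definition Lq_pow :: "real \<Rightarrow> 'a::euclidean_space set \<Rightarrow> ('a \<Rightarrow> real) \<Rightarrow> real" where
  "Lq_pow q \<Omega> u = (LINT x:\<Omega>|lborel. \<bar>u x\<bar> powr q)"

definition normsq :: "real \<Rightarrow> 'a::euclidean_space set \<Rightarrow> ('a \<Rightarrow> real) \<Rightarrow> real" where
  "normsq s \<Omega> u = integral\<^sup>L (lborel \<Otimes>\<^sub>M lborel) (gagliardo_integrand s u) + Lq_pow 2 \<Omega> u"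

definition I_func :: "real \<Rightarrow> real \<Rightarrow> 'a::euclidean_space set \<Rightarrow> ('a \<Rightarrow> real) \<Rightarrow> real" where
  "I_func s p \<Omega> u = normsq s \<Omega> u / 2 - Lq_pow p \<Omega> u / p"

text \<open>Nehari manifold; u \<noteq> 0 means u is not the zero element of the function space,
  i.e. not a.e. zero.\<close>
definition Nehari :: "real \<Rightarrow> real \<Rightarrow> 'a::euclidean_space set \<Rightarrow> ('a \<Rightarrow> real) set" where
  "Nehari s p \<Omega> = {u \<in> D0s2 s \<Omega>. \<not> (AE x in lborel. u x = 0) \<and>
      normsq s \<Omega> u = Lq_pow p \<Omega> u}"

definition m_level :: "real \<Rightarrow> real \<Rightarrow> 'a::euclidean_space set \<Rightarrow> ereal" where
  "m_level s p \<Omega> = (INF u\<in>Nehari s p \<Omega>. ereal (I_func s p \<Omega> u))"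

end

theory Submission
  imports Defs
begin

(* Every nonzero u on the critical Nehari manifold can be pulled back onto the subcritical
   ones: with A = ||u||^2 and L(p) = |u|_p^p, the multiple t u with t^(p-2) = A / L(p) lies on
   N_p, and I_p(t u) = (A / L(p))^(2/(p-2)) A (1/2 - 1/p).  On the bounded domain
   L(p) -> L(2_s^* ) as p -> 2_s^* by dominated convergence (|u|^p <= 1 + |u|^(2_s^* )), and
   A = L(2_s^* ), so these levels tend to I_(2_s^* )(u).  Hence limsup m_p <= I_(2_s^* )(u)
   for every such u. *)

lemma Lq_pow_scale:
  assumes "t > 0"
  shows "Lq_pow q \<Omega> (\<lambda>x. t * u x) = t powr q * Lq_pow q \<Omega> u"
  using assms by (simp add: Lq_pow_def abs_mult powr_mult)

lemma gagliardo_integrand_scale: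
  "gagliardo_integrand s (\<lambda>x. t * u x) = (\<lambda>z. t\<^sup>2 * gagliardo_integrand s u z)"
  unfolding gagliardo_integrand_def by (auto simp: power2_eq_square algebra_simps)

lemma normsq_scale:
  assumes "t > 0"
  shows "normsq s \<Omega> (\<lambda>x. t * u x) = t\<^sup>2 * normsq s \<Omega> u"
  unfolding normsq_def gagliardo_integrand_scale Lq_pow_scale[OF assms]
  using assms by (simp add: algebra_simps powr_numeral)

lemma D0s2_scale:
  assumes "t > 0" "u \<in> D0s2 s \<Omega>"
  shows "(\<lambda>x. t * u x) \<in> D0s2 s \<Omega>"
  using assms by (auto simp: D0s2_def abs_mult powr_mult gagliardo_integrand_scale)

lemma not_AE_zero_scale:
  assumes "(t::real) \<noteq> 0" "\<not> (AE x in M. u x = 0)"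
  shows "\<not> (AE x in M. t * u x = 0)"
  using assms by (auto elim!: eventually_mono)

lemma powr_le_one_plus_powr:
  fixes a p c :: real
  assumes "0 < p" "p \<le> c" "0 \<le> a"
  shows "a powr p \<le> 1 + a powr c"
proof (cases "a \<le> 1")
  case True
  then have "a powr p \<le> 1"
    by (metis assms(1,3) order_less_le powr_mono2 powr_one_eq_one)
  then show ?thesis by (smt (verit) powr_ge_zero)
next
  case False
  then have "a powr p \<le> a powr c" using assms by (intro powr_mono) auto
  then show ?thesis by simp
qed

lemma Lq_pow_eq_integral:
  assumes "\<forall>x. x \<notin> \<Omega> \<longrightarrow> u x = 0"
  shows "Lq_pow p \<Omega> u = integral\<^sup>L lborel (\<lambda>x. \<bar>u x\<bar> powr p)"
proof -
  have "(\<lambda>x. indicator \<Omega> x *\<^sub>R \<bar>u x\<bar> powr p) = (\<lambda>x. \<bar>u x\<bar> powr p)"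
    using assms by (auto simp: indicator_def fun_eq_iff)
  then show ?thesis unfolding Lq_pow_def set_lebesgue_integral_def by simp
qed

lemma Lq_pow_tendsto_at_left:
  assumes [measurable]: "u \<in> borel_measurable lborel" and \<Omega>: "\<Omega> \<in> sets lborel"
    and int: "integrable lborel (\<lambda>x. \<bar>u x\<bar> powr c)"
    and vanish: "\<forall>x. x \<notin> \<Omega> \<longrightarrow> u x = 0"
    and fin: "emeasure lborel \<Omega> < \<infinity>"
    and "c > 0"
  shows "((\<lambda>p. Lq_pow p \<Omega> u) \<longlongrightarrow> Lq_pow c \<Omega> u) (at_left c)"
proof (rule tendsto_at_left_sequentially[of 0])
  fix S :: "nat \<Rightarrow> real"
  assume S: "\<And>n. S n < c" "\<And>n. 0 < S n" and "S \<longlonglongrightarrow> c"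
  have dominated: "integrable lborel (\<lambda>x. indicator \<Omega> x + \<bar>u x\<bar> powr c)"
    using \<Omega> fin int by (intro Bochner_Integration.integrable_add integrable_real_indicator)
  have "norm (\<bar>u x\<bar> powr S n) \<le> indicator \<Omega> x + \<bar>u x\<bar> powr c" for x n
    using vanish powr_le_one_plus_powr[of "S n" c] S[of n] by (auto simp: indicator_def)
  moreover have "(\<lambda>n. \<bar>u x\<bar> powr S n) \<longlonglongrightarrow> \<bar>u x\<bar> powr c" for x
    using \<open>S \<longlonglongrightarrow> c\<close> by (cases "u x = 0") (auto intro!: tendsto_intros)
  ultimately show "(\<lambda>n. Lq_pow (S n) \<Omega> u) \<longlonglongrightarrow> Lq_pow c \<Omega> u"
    unfolding Lq_pow_eq_integral[OF vanish]
    by (intro integral_dominated_convergence[OF _ _ dominated] AE_I2) auto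
qed (use \<open>c > 0\<close> in auto)

lemma Lq_pow_pos:
  assumes [measurable]: "u \<in> borel_measurable lborel"
    and int: "integrable lborel (\<lambda>x. \<bar>u x\<bar> powr q)"
    and vanish: "\<forall>x. x \<notin> \<Omega> \<longrightarrow> u x = 0"
    and nonzero: "\<not> (AE x in lborel. u x = 0)"
  shows "Lq_pow q \<Omega> u > 0"
proof -
  have "integral\<^sup>L lborel (\<lambda>x. \<bar>u x\<bar> powr q) \<noteq> 0"
  proof
    assume "integral\<^sup>L lborel (\<lambda>x. \<bar>u x\<bar> powr q) = 0"
    then have "AE x in lborel. \<bar>u x\<bar> powr q = 0"
      using integral_nonneg_eq_0_iff_AE[OF int] by auto
    then show False using nonzero by (auto elim!: eventually_mono)
  qed
  moreover have "integral\<^sup>L lborel (\<lambda>x. \<bar>u x\<bar> powr q) \<ge> 0"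
    by (intro Bochner_Integration.integral_nonneg) auto
  ultimately show ?thesis unfolding Lq_pow_eq_integral[OF vanish] by linarith
qed

(* The maximum over t > 0 of the fibering map t |-> t^2 A / 2 - t^p L / p, attained at
   t^(p-2) = A / L. *)
definition fibering_max :: "real \<Rightarrow> real \<Rightarrow> real \<Rightarrow> real" where
  "fibering_max p A L = (A / L) powr (2 / (p - 2)) * A * (1/2 - 1/p)"

lemma m_level_le_fibering_max:
  assumes "p > 2" "u \<in> D0s2 s \<Omega>" "\<not> (AE x in lborel. u x = 0)"
    and A: "normsq s \<Omega> u > 0" and L: "Lq_pow p \<Omega> u > 0"
  shows "m_level s p \<Omega> \<le> ereal (fibering_max p (normsq s \<Omega> u) (Lq_pow p \<Omega> u))"
proof -
  define t where "t = (normsq s \<Omega> u / Lq_pow p \<Omega> u) powr (1 / (p - 2))"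
  have "t > 0" unfolding t_def using A L by simp
  have t2: "t\<^sup>2 = (normsq s \<Omega> u / Lq_pow p \<Omega> u) powr (2 / (p - 2))"
  proof -
    have "t\<^sup>2 = t powr 2" using \<open>t > 0\<close> by (simp add: powr_numeral)
    then show ?thesis using A L by (simp add: t_def powr_powr)
  qed
  have "t powr p = t powr 2 * t powr (p - 2)"
    by (simp flip: powr_add)
  also have "t powr (p - 2) = normsq s \<Omega> u / Lq_pow p \<Omega> u"
    using \<open>p > 2\<close> A L by (simp add: t_def powr_powr)
  also have "t powr 2 = t\<^sup>2"
    using \<open>t > 0\<close> by (simp add: powr_numeral)
  finally have "Lq_pow p \<Omega> (\<lambda>x. t * u x) = t\<^sup>2 * normsq s \<Omega> u"
    using L by (simp add: Lq_pow_scale[OF \<open>t > 0\<close>])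
  moreover have "normsq s \<Omega> (\<lambda>x. t * u x) = t\<^sup>2 * normsq s \<Omega> u"
    using normsq_scale[OF \<open>t > 0\<close>] .
  ultimately have "(\<lambda>x. t * u x) \<in> Nehari s p \<Omega>"
    and "I_func s p \<Omega> (\<lambda>x. t * u x) = fibering_max p (normsq s \<Omega> u) (Lq_pow p \<Omega> u)"
    using assms \<open>t > 0\<close> D0s2_scale not_AE_zero_scale
    by (auto simp: Nehari_def I_func_def fibering_max_def t2 algebra_simps)
  then show ?thesis unfolding m_level_def by (metis INF_lower)
qed

lemma Limsup_m_level_le_I_func:
  fixes u :: "'a::euclidean_space \<Rightarrow> real"
  assumes c: "c = crit_exp DIM('a) s" "c > 2"
    and \<Omega>: "open \<Omega>" "bounded \<Omega>"
    and u: "u \<in> Nehari s c \<Omega>"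
  shows "Limsup (at_left c) (\<lambda>p. m_level s p \<Omega>) \<le> ereal (I_func s c \<Omega> u)"
proof -
  define A where "A = normsq s \<Omega> u"
  define L where "L p = Lq_pow p \<Omega> u" for p
  have uD: "u \<in> D0s2 s \<Omega>" and nonzero: "\<not> (AE x in lborel. u x = 0)" and "A = L c"
    using u by (auto simp: Nehari_def A_def L_def)
  then have [measurable]: "u \<in> borel_measurable lborel"
    and int: "integrable lborel (\<lambda>x. \<bar>u x\<bar> powr c)"
    and vanish: "\<forall>x. x \<notin> \<Omega> \<longrightarrow> u x = 0"
    using c by (auto simp: D0s2_def)
  have "L c > 0"
    unfolding L_def using Lq_pow_pos[OF _ int vanish nonzero] by simp
  have L_tendsto: "(L \<longlongrightarrow> L c) (at_left c)"
    unfolding L_def using c \<Omega>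
    by (intro Lq_pow_tendsto_at_left int vanish emeasure_bounded_finite) auto
  have "eventually (\<lambda>p. 2 < p \<and> L p > 0) (at_left c)"
    using eventually_at_left_real[OF \<open>c > 2\<close>] order_tendstoD(1)[OF L_tendsto \<open>L c > 0\<close>]
    by eventually_elim auto
  then have "eventually (\<lambda>p. m_level s p \<Omega> \<le> ereal (fibering_max p A (L p))) (at_left c)"
  proof eventually_elim
    case (elim p)
    then show ?case
      using m_level_le_fibering_max[OF _ uD nonzero] \<open>L c > 0\<close> \<open>A = L c\<close>
      unfolding A_def L_def by simp
  qed
  then have "Limsup (at_left c) (\<lambda>p. m_level s p \<Omega>)
      \<le> Limsup (at_left c) (\<lambda>p. ereal (fibering_max p A (L p)))"
    by (rule Limsup_mono)
  also have "\<dots> = ereal (fibering_max c A (L c))"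
    unfolding fibering_max_def using \<open>L c > 0\<close> \<open>c > 2\<close>
    by (intro lim_imp_Limsup tendsto_ereal tendsto_intros L_tendsto tendsto_ident_at) auto
  also have "fibering_max c A (L c) = I_func s c \<Omega> u"
    using \<open>A = L c\<close> \<open>L c > 0\<close>
    by (simp add: fibering_max_def I_func_def A_def L_def algebra_simps)
  finally show ?thesis .
qed

theorem lemma3p2:
  fixes s :: real and \<Omega> :: "'a::euclidean_space set"
  assumes "0 < s" "s < 1" "real DIM('a) > 2 * s"
    and "smooth_bounded_domain \<Omega>"
  shows "Limsup (at_left (crit_exp DIM('a) s)) (\<lambda>p. m_level s p \<Omega>)
           \<le> m_level s (crit_exp DIM('a) s) \<Omega>"
proof -
  have "crit_exp DIM('a) s > 2"
    using assms(1,3) by (simp add: crit_exp_def field_simps)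
  moreover have "open \<Omega>" "bounded \<Omega>"
    using assms(4) by (auto simp: smooth_bounded_domain_def)
  ultimately show ?thesis
    unfolding m_level_def[of s "crit_exp DIM('a) s"]
    by (intro INF_greatest Limsup_m_level_le_I_func) auto
qed

end
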